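(* Fix $d\ge 1$, $L>0$, $V\in\mathscr V$ and $\theta\ge 0$. There exists $B_0<\infty$ such that for every $\rho\in\mathscr P$ with $\|\rho\|_{\infty}>B_0$ there is another $\rho^{\ddagger}\in\mathscr P$ with $\mathcal F_\theta(\rho)>\mathcal F_\theta(\rho^{\ddagger})$.
   Context: $\mathbb T_L^d=\mathbb R^d/(L\mathbb Z)^d$. The class $\mathscr V$ consists of measurable $V:\mathbb R^d\to\mathbb R$ with $V\in L^1(\mathbb R^d)$, negative part $V^-\in L^\infty$ (so $V\ge -V_0$ for some $V_0<\infty$), $V(x)=V(-x)$, and $V(x)=0$ for $|x|>a$, where $0<a<L/2$; $V$ is regarded as a function on $\mathbb T_L^d$ by periodization. $\mathscr P$ denotes the set of probability densities on $\mathbb T_L^d$, and $\rho_0\equiv L^{-d}$ the uniform density. For $\theta\ge0$ the free energy is $\mathcal F_\theta(\rho)=\mathcal S(\rho)+\tfrac12\theta L^d\mathcal E(\rho,\rho)$, where $\mathcal S(\rho)=\int_{\mathbb T_L^d}\rho\log\rho\,dx$ (set to $+\infty$ if $\rho\log\rho\notin L^1$) and $\mathcal E(f,g)=\int_{\mathbb T_L^d\times\mathbb T_L^d}V(x-y)f(x)g(y)\,dx\,dy$. *)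

theory Defs
  imports "HOL-Analysis.Analysis" "HOL-Probability.Essential_Supremum"
begin

text \<open>Integer lattice Z^d inside R^d (R^d = real^'n, d = CARD('n)).\<close>
definition lattice :: "(real^'n) set" where
  "lattice = {k. \<forall>i. k $ i \<in> \<int>}"

text \<open>Fundamental domain [0,L)^d of the torus R^d/(L Z)^d.\<close>
definition cube :: "real \<Rightarrow> (real^'n) set" where
  "cube L = {x. \<forall>i. 0 \<le> x $ i \<and> x $ i < L}"

definition potential_class :: "real \<Rightarrow> real \<Rightarrow> (real^'n \<Rightarrow> real) set" where
  "potential_class L a = {V. V \<in> borel_measurable lborel \<and> integrable lborel V
      \<and> (\<exists>V0. AE x in lborel. - V0 \<le> V x)
      \<and> (\<forall>x. V (- x) = V x)
      \<and> (\<forall>x. norm x > a \<longrightarrow> V x = 0)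
      \<and> 0 < a \<and> a < L / 2}"

definition periodize :: "real \<Rightarrow> (real^'n \<Rightarrow> real) \<Rightarrow> real^'n \<Rightarrow> real" where
  "periodize L V z = infsum (\<lambda>k. V (z - L *\<^sub>R k)) lattice"

text \<open>Probability densities on the torus, represented as (L Z)^d-periodic functions on R^d.\<close>
definition densities :: "real \<Rightarrow> (real^'n \<Rightarrow> real) set" where
  "densities L = {\<rho>. \<rho> \<in> borel_measurable lborel
      \<and> (\<forall>x. 0 \<le> \<rho> x)
      \<and> (\<forall>x k. k \<in> lattice \<longrightarrow> \<rho> (x + L *\<^sub>R k) = \<rho> x)
      \<and> set_integrable lborel (cube L) \<rho>
      \<and> (LINT x:cube L|lborel. \<rho> x) = 1}"

definition entropy :: "real \<Rightarrow> (real^'n \<Rightarrow> real) \<Rightarrow> ereal" where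
  "entropy L \<rho> = (if set_integrable lborel (cube L) (\<lambda>x. \<rho> x * ln (\<rho> x))
      then ereal (LINT x:cube L|lborel. \<rho> x * ln (\<rho> x)) else \<infinity>)"

text \<open>Energy E(rho,rho) = int int V(x-y) rho(x) rho(y); the integrand is bounded below by an
  integrable function, so if it is not integrable its integral is +infinity.\<close>
definition energy :: "real \<Rightarrow> (real^'n \<Rightarrow> real) \<Rightarrow> (real^'n \<Rightarrow> real) \<Rightarrow> ereal" where
  "energy L V \<rho> = (let g = (\<lambda>(x,y). periodize L V (x - y) * \<rho> x * \<rho> y) in
      if set_integrable (lborel \<Otimes>\<^sub>M lborel) (cube L \<times> cube L) g
      then ereal (LINT p:cube L \<times> cube L|(lborel \<Otimes>\<^sub>M lborel). g p) else \<infinity>)"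

definition free_energy :: "real \<Rightarrow> (real^'n \<Rightarrow> real) \<Rightarrow> real \<Rightarrow> (real^'n \<Rightarrow> real) \<Rightarrow> ereal" where
  "free_energy L V \<theta> \<rho> = entropy L \<rho>
      + ereal (\<theta> * L ^ CARD('n) / 2) * energy L V \<rho>"

definition sup_norm :: "real \<Rightarrow> (real^'n \<Rightarrow> real) \<Rightarrow> ereal" where
  "sup_norm L \<rho> = esssup (restrict_space lborel (cube L)) (\<lambda>x. ereal \<bar>\<rho> x\<bar>)"

end

theory Submission
  imports Defs
begin

(* If the density rho exceeds a level M on a set of positive measure, cut it off
   at M and spread the removed mass m > 0 uniformly over the fundamental cube (volume ell):
     rho_flat = min rho M + m / ell.
   By convexity of t ln t the entropy drops by at least m (ln M + ln ell).  On the cube the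
   periodized potential is a finite sum Vper of translates of V (since V has range a < L/2);
   Vper is bounded below and integrable, so the interaction energy rises by at most m K for a
   constant K = energy_cost independent of rho and M.  Hence once ln M + ln ell >= c K + 1
   (c the coupling constant of the free energy), the free energy strictly decreases. *)

lemma cube_borel [measurable]: "cube L \<in> sets (borel :: (real^'n) measure)"
  unfolding cube_def by measurable

lemma cube_lborel [measurable]: "cube L \<in> sets (lborel :: (real^'n) measure)"
  by simp

lemma cube_emeasure:
  assumes "L > 0"
  shows "0 < emeasure lborel (cube L :: (real^'n) set)"
    and "emeasure lborel (cube L :: (real^'n) set) < \<infinity>"
proof -
  have sub: "cube L \<subseteq> cbox (0::real^'n) (\<chi> i. L)"
    unfolding cube_def by (auto simp: mem_box_cart less_imp_le)
  have sup: "box (0::real^'n) (\<chi> i. L) \<subseteq> cube L"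
    unfolding cube_def by (auto simp: mem_box_cart less_imp_le)
  have "emeasure lborel (cube L :: (real^'n) set) \<le> emeasure lborel (cbox (0::real^'n) (\<chi> i. L))"
    by (rule emeasure_mono[OF sub]) simp
  also have "\<dots> < \<infinity>" by (rule emeasure_lborel_cbox_finite)
  finally show "emeasure lborel (cube L :: (real^'n) set) < \<infinity>" .
  have sides: "\<And>b. b \<in> Basis \<Longrightarrow> (0::real^'n) \<bullet> b < (\<chi> i. L) \<bullet> b"
    using assms by (auto simp: Basis_vec_def inner_axis)
  then have "(\<Prod>b\<in>(Basis::(real^'n) set). ((\<chi> i. L) - 0) \<bullet> b) > 0"
    by (intro prod_pos) auto
  then have "0 < emeasure lborel (box (0::real^'n) (\<chi> i. L))"
    using sides by (subst emeasure_lborel_box) (auto intro: less_imp_le)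
  also have "\<dots> \<le> emeasure lborel (cube L :: (real^'n) set)"
    by (rule emeasure_mono[OF sup]) simp
  finally show "0 < emeasure lborel (cube L :: (real^'n) set)" .
qed

lemma sup_norm_gt_imp_pos_measure:
  assumes [measurable]: "\<rho> \<in> borel_measurable borel" and nonneg: "\<And>x. 0 \<le> \<rho> x"
    and gt: "sup_norm L \<rho> > ereal M"
  shows "0 < emeasure lborel {x \<in> cube L. M < \<rho> x}"
proof -
  let ?R = "restrict_space lborel (cube L)"
  have meas: "(\<lambda>x. ereal \<bar>\<rho> x\<bar>) \<in> borel_measurable ?R"
    by (rule measurable_restrict_space1) simp
  have "0 < emeasure ?R {x \<in> space ?R. ereal M < ereal \<bar>\<rho> x\<bar>}"
    using esssup_pos_measure[OF meas, of "ereal M"] gt unfolding sup_norm_def by simp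
  also have "{x \<in> space ?R. ereal M < ereal \<bar>\<rho> x\<bar>} = {x \<in> cube L. M < \<rho> x}"
    using nonneg by (auto simp: space_restrict_space)
  also have "emeasure ?R {x \<in> cube L. M < \<rho> x} = emeasure lborel {x \<in> cube L. M < \<rho> x}"
    by (subst emeasure_restrict_space) auto
  finally show ?thesis .
qed

lemma integrable_nn_integral_le:
  fixes h :: "'a \<Rightarrow> real"
  assumes [measurable]: "h \<in> borel_measurable M" and nonneg: "\<And>x. 0 \<le> h x"
    and bound: "(\<integral>\<^sup>+x. ennreal (h x) \<partial>M) \<le> ennreal b" and "0 \<le> b"
  shows "integrable M h" and "integral\<^sup>L M h \<le> b"
proof -
  have fin: "(\<integral>\<^sup>+x. ennreal (h x) \<partial>M) < \<infinity>" using bound by (simp add: le_less_trans)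
  show "integrable M h" using fin nonneg by (intro integrableI_bounded) auto
  have "integral\<^sup>L M h = enn2real (\<integral>\<^sup>+x. ennreal (h x) \<partial>M)"
    using nonneg by (intro integral_eq_nn_integral) auto
  also have "\<dots> \<le> b" using bound \<open>0 \<le> b\<close> fin by (simp add: enn2real_leI)
  finally show "integral\<^sup>L M h \<le> b" .
qed

lemma nn_integral_tensor:
  fixes f h :: "real^'n \<Rightarrow> real"
  assumes [measurable]: "f \<in> borel_measurable lborel" "h \<in> borel_measurable lborel"
    and "\<And>x. 0 \<le> f x" "\<And>x. 0 \<le> h x"
  shows "(\<integral>\<^sup>+p. ennreal (f (fst p) * h (snd p)) \<partial>(lborel \<Otimes>\<^sub>M lborel))
    = (\<integral>\<^sup>+x. ennreal (f x) \<partial>lborel) * (\<integral>\<^sup>+y. ennreal (h y) \<partial>lborel)"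
proof -
  have "(\<integral>\<^sup>+p. ennreal (f (fst p) * h (snd p)) \<partial>(lborel \<Otimes>\<^sub>M lborel))
      = (\<integral>\<^sup>+x. \<integral>\<^sup>+y. ennreal (f x * h y) \<partial>lborel \<partial>lborel)"
    by (subst lborel.nn_integral_fst[symmetric]) auto
  also have "\<dots> = (\<integral>\<^sup>+x. ennreal (f x) * \<integral>\<^sup>+y. ennreal (h y) \<partial>lborel \<partial>lborel)"
    using assms by (intro nn_integral_cong) (simp add: ennreal_mult nn_integral_cmult)
  also have "\<dots> = (\<integral>\<^sup>+x. ennreal (f x) \<partial>lborel) * (\<integral>\<^sup>+y. ennreal (h y) \<partial>lborel)"
    by (simp add: nn_integral_multc)
  finally show ?thesis .
qed

lemma integral_tensor:
  fixes f h :: "real^'n \<Rightarrow> real"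
  assumes [measurable]: "f \<in> borel_measurable lborel" "h \<in> borel_measurable lborel"
    and f0: "\<And>x. 0 \<le> f x" and h0: "\<And>x. 0 \<le> h x"
    and "integrable lborel f" "integrable lborel h"
  shows "integrable (lborel \<Otimes>\<^sub>M lborel) (\<lambda>p. f (fst p) * h (snd p))"
    and "(\<integral>p. f (fst p) * h (snd p) \<partial>(lborel \<Otimes>\<^sub>M lborel)) = integral\<^sup>L lborel f * integral\<^sup>L lborel h"
proof -
  have nonneg: "0 \<le> f (fst p) * h (snd p)" for p using f0 h0 by simp
  have "(\<integral>\<^sup>+p. ennreal (f (fst p) * h (snd p)) \<partial>(lborel \<Otimes>\<^sub>M lborel))
      = ennreal (integral\<^sup>L lborel f) * ennreal (integral\<^sup>L lborel h)"
    using assms by (simp add: nn_integral_tensor nn_integral_eq_integral)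
  also have "\<dots> = ennreal (integral\<^sup>L lborel f * integral\<^sup>L lborel h)"
    using assms by (simp add: ennreal_mult integral_nonneg_AE)
  finally have nn: "(\<integral>\<^sup>+p. ennreal (f (fst p) * h (snd p)) \<partial>(lborel \<Otimes>\<^sub>M lborel))
      = ennreal (integral\<^sup>L lborel f * integral\<^sup>L lborel h)" .
  then show int: "integrable (lborel \<Otimes>\<^sub>M lborel) (\<lambda>p. f (fst p) * h (snd p))"
    using nonneg by (intro integrableI_bounded) auto
  have "(\<integral>p. f (fst p) * h (snd p) \<partial>(lborel \<Otimes>\<^sub>M lborel))
      = enn2real (\<integral>\<^sup>+p. ennreal (f (fst p) * h (snd p)) \<partial>(lborel \<Otimes>\<^sub>M lborel))"
    using nonneg by (intro integral_eq_nn_integral) auto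
  then show "(\<integral>p. f (fst p) * h (snd p) \<partial>(lborel \<Otimes>\<^sub>M lborel)) = integral\<^sup>L lborel f * integral\<^sup>L lborel h"
    unfolding nn using assms by (simp add: integral_nonneg_AE)
qed

lemma xlnx_tangent:
  fixes a b :: real assumes a: "0 \<le> a" and b: "0 < b"
  shows "a * ln a - b * ln b \<ge> (a - b) + (a - b) * ln b"
proof (cases "a = 0")
  case True then show ?thesis using b by simp
next
  case False
  then have a': "0 < a" using a by simp
  have "ln (b / a) \<le> b / a - 1" using a' b by (intro ln_le_minus_one) auto
  then have "a * ln (b / a) \<le> a * (b / a - 1)" using a' by (intro mult_left_mono) auto
  also have "a * (b / a - 1) = b - a" using a' by (simp add: field_simps)
  finally have "a * (ln b - ln a) \<le> b - a" using a' b by (simp add: ln_div)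
  then show ?thesis by (simp add: algebra_simps)
qed

lemma ln_tangent:
  fixes y l :: real assumes "0 < y" "0 < l"
  shows "ln y \<le> l * y - 1 - ln l"
proof -
  have "ln (l * y) \<le> l * y - 1" using assms by (intro ln_le_minus_one) auto
  then show ?thesis using assms by (simp add: ln_mult)
qed

lemma entropy_indicator:
  "entropy L \<rho> = (if integrable lborel (\<lambda>x. indicator (cube L) x * (\<rho> x * ln (\<rho> x)))
    then ereal (\<integral>x. indicator (cube L) x * (\<rho> x * ln (\<rho> x)) \<partial>lborel) else \<infinity>)"
  by (simp add: entropy_def set_integrable_def set_lebesgue_integral_def)

section \<open>The periodized potential on the cube\<close>

text \<open>Lattice points all of whose coordinates lie in {-1,0,1}: for x, y in the cube only
  these translates of V contribute to the periodization of V at x - y.\<close>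
definition near_cells :: "(real^'n) set" where
  "near_cells = {k \<in> lattice. \<forall>i. \<bar>k $ i\<bar> \<le> 1}"

lemma finite_near_cells: "finite (near_cells :: (real^'n) set)"
proof -
  have "(near_cells :: (real^'n) set) \<subseteq> (\<lambda>f. \<chi> i. f i) ` (UNIV \<rightarrow>\<^sub>E ({-1,0,1}::real set))"
  proof
    fix k :: "real^'n" assume k: "k \<in> near_cells"
    have "k $ i \<in> {-1,0,1}" for i
    proof -
      from k have "k $ i \<in> \<int>" "\<bar>k $ i\<bar> \<le> 1" by (auto simp: near_cells_def lattice_def)
      then obtain z :: int where z: "k $ i = of_int z" and "\<bar>real_of_int z\<bar> \<le> 1"
        by (auto elim: Ints_cases)
      then have "\<bar>z\<bar> \<le> 1" by (metis of_int_abs of_int_le_1_iff)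
      then show ?thesis using z by auto
    qed
    then have "(\<lambda>i. k $ i) \<in> UNIV \<rightarrow>\<^sub>E ({-1,0,1}::real set)" by auto
    then show "k \<in> (\<lambda>f. \<chi> i. f i) ` (UNIV \<rightarrow>\<^sub>E ({-1,0,1}::real set))"
      by (intro image_eqI[where x="\<lambda>i. k $ i"]) auto
  qed
  moreover have "finite ((\<lambda>f. \<chi> i. f i) ` (UNIV \<rightarrow>\<^sub>E ({-1,0,1}::real set)) :: (real^'n) set)"
    by (intro finite_imageI finite_PiE) auto
  ultimately show ?thesis by (rule finite_subset)
qed

locale potential_setting =
  fixes V :: "real^'n \<Rightarrow> real" and L a V0 :: real
  assumes L_pos: "L > 0" and V_meas: "V \<in> borel_measurable lborel"
    and V_int: "integrable lborel V" and V_lower: "AE x in lborel. -V0 \<le> V x"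
    and V0_nonneg: "0 \<le> V0" and V_even: "\<And>x. V (-x) = V x"
    and V_support: "\<And>x. norm x > a \<Longrightarrow> V x = 0" and a_pos: "0 < a" and a_small: "a < L/2"

lemma potential_class_setting:
  assumes "L > 0" and "V \<in> potential_class L a"
  obtains V0 where "potential_setting V L a V0"
proof -
  from assms(2) obtain V1 where V1: "AE x in lborel. -V1 \<le> V x"
    unfolding potential_class_def by auto
  have "AE x in lborel. - max V1 0 \<le> V x" using V1 by (rule eventually_mono) auto
  then have "potential_setting V L a (max V1 0)"
    using assms unfolding potential_class_def by unfold_locales auto
  then show ?thesis by (rule that)
qed

context potential_setting
begin

lemma V_borel [measurable]: "V \<in> borel_measurable borel"
  using V_meas by simp

definition Vper :: "real^'n \<Rightarrow> real" where
  "Vper z = (\<Sum>k\<in>near_cells. V (z - L *\<^sub>R k))"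

lemma Vper_borel [measurable]: "Vper \<in> borel_measurable borel"
  unfolding Vper_def by measurable

text \<open>Since V vanishes outside the ball of radius a < L/2, lattice translates with a
  coordinate of size at least 2 do not contribute for x, y in the cube.\<close>
lemma periodize_eq_Vper:
  assumes x: "x \<in> cube L" and y: "y \<in> cube L"
  shows "periodize L V (x - y) = Vper (x - y)"
proof -
  have far: "V (x - y - L *\<^sub>R k) = 0" if k: "k \<in> lattice - near_cells" for k
  proof -
    obtain i where i: "\<bar>k $ i\<bar> > 1" using k by (auto simp: near_cells_def not_le)
    from k have "k $ i \<in> \<int>" by (auto simp: lattice_def)
    then obtain z :: int where z: "k $ i = of_int z" by (auto elim: Ints_cases)
    with i have "\<bar>z\<bar> > 1" by (metis of_int_abs of_int_less_iff of_int_1)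
    then have "\<bar>z\<bar> \<ge> 2" by linarith
    then have "\<bar>k $ i\<bar> \<ge> 2" using z by (metis of_int_abs of_int_le_iff of_int_numeral)
    then have "L * 2 \<le> L * \<bar>k $ i\<bar>" using L_pos by (intro mult_left_mono) auto
    then have "\<bar>L * k $ i\<bar> \<ge> 2 * L" using L_pos by (simp add: abs_mult)
    moreover have "\<bar>x $ i - y $ i\<bar> < L"
    proof -
      have "0 \<le> x $ i" "x $ i < L" "0 \<le> y $ i" "y $ i < L" using x y by (auto simp: cube_def)
      then show ?thesis unfolding abs_less_iff by linarith
    qed
    ultimately have "\<bar>(x - y - L *\<^sub>R k) $ i\<bar> > L"
      by (simp add: abs_le_iff abs_less_iff) linarith
    then have "norm (x - y - L *\<^sub>R k) > a"
      using component_le_norm_cart[of "x - y - L *\<^sub>R k" i] a_small a_pos by linarith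
    then show ?thesis by (rule V_support)
  qed
  have "infsum (\<lambda>k. V (x - y - L *\<^sub>R k)) lattice = infsum (\<lambda>k. V (x - y - L *\<^sub>R k)) near_cells"
    using far by (intro infsum_cong_neutral) (auto simp: near_cells_def)
  also have "\<dots> = Vper (x - y)" unfolding Vper_def by (rule infsum_finite[OF finite_near_cells])
  finally show ?thesis unfolding periodize_def .
qed

lemma V_translate_lower: "AE y in lborel. -V0 \<le> V (c + y)"
proof -
  have "AE z in distr lborel borel ((+) c). -V0 \<le> V z" using V_lower unfolding lborel_distr_plus .
  then show ?thesis by (subst (asm) AE_distr_iff) auto
qed

lemma Vper_lower:
  "AE p in lborel \<Otimes>\<^sub>M lborel. - (real (card (near_cells::(real^'n) set)) * V0) \<le> Vper (fst p - snd p)"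
proof -
  have "AE p in lborel \<Otimes>\<^sub>M lborel. \<forall>k\<in>near_cells. -V0 \<le> V (fst p - snd p - L *\<^sub>R k)"
  proof (rule lborel_pair.AE_pair_measure)
    show "{p \<in> space (lborel \<Otimes>\<^sub>M lborel). \<forall>k\<in>near_cells. -V0 \<le> V (fst p - snd p - L *\<^sub>R k)}
        \<in> sets (lborel \<Otimes>\<^sub>M lborel)"
      using finite_near_cells by measurable
    have translates: "AE y in lborel. -V0 \<le> V (x - y - L *\<^sub>R k)" for x k
      using V_translate_lower[of "L *\<^sub>R k - x"]
      by (rule eventually_mono) (metis V_even minus_diff_eq diff_diff_eq2 add.commute diff_add_eq)
    then have "AE y in lborel. \<forall>k\<in>near_cells. -V0 \<le> V (x - y - L *\<^sub>R k)" for x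
      by (intro AE_finite_allI[OF finite_near_cells])
    then show "AE x in lborel. AE y in lborel. \<forall>k\<in>near_cells. -V0 \<le> V (fst (x, y) - snd (x, y) - L *\<^sub>R k)"
      by simp
  qed
  then show ?thesis
    by (rule eventually_mono) (use sum_mono[of near_cells "\<lambda>_. -V0"] in \<open>force simp: Vper_def\<close>)
qed

definition Vper_mass :: real where
  "Vper_mass = real (card (near_cells::(real^'n) set)) * (\<integral>z. \<bar>V z\<bar> \<partial>lborel)"

lemma Vper_mass_nonneg: "0 \<le> Vper_mass"
  unfolding Vper_mass_def by simp

lemma Vper_nn_integral_le:
  assumes "\<And>k y. V (g y - L *\<^sub>R k) = V (c k + y)"
  shows "(\<integral>\<^sup>+y. ennreal \<bar>Vper (g y)\<bar> \<partial>lborel) \<le> ennreal Vper_mass"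
proof -
  have translate: "(\<integral>\<^sup>+y. ennreal \<bar>V (c + y)\<bar> \<partial>lborel) = ennreal (\<integral>z. \<bar>V z\<bar> \<partial>lborel)" for c
  proof -
    have "(\<integral>\<^sup>+y. ennreal \<bar>V (c + y)\<bar> \<partial>lborel) = (\<integral>\<^sup>+z. ennreal \<bar>V z\<bar> \<partial>distr lborel borel ((+) c))"
      by (subst nn_integral_distr) auto
    also have "\<dots> = ennreal (\<integral>z. \<bar>V z\<bar> \<partial>lborel)"
      unfolding lborel_distr_plus using V_int by (intro nn_integral_eq_integral) auto
    finally show ?thesis .
  qed
  have "ennreal \<bar>Vper z\<bar> \<le> (\<Sum>k\<in>near_cells. ennreal \<bar>V (z - L *\<^sub>R k)\<bar>)" for z
    unfolding Vper_def by (subst sum_ennreal) (auto intro: ennreal_leI sum_abs)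
  then have "(\<integral>\<^sup>+y. ennreal \<bar>Vper (g y)\<bar> \<partial>lborel)
      \<le> (\<integral>\<^sup>+y. (\<Sum>k\<in>near_cells. ennreal \<bar>V (g y - L *\<^sub>R k)\<bar>) \<partial>lborel)"
    by (intro nn_integral_mono)
  also have "\<dots> = (\<Sum>k\<in>near_cells. (\<integral>\<^sup>+y. ennreal \<bar>V (c k + y)\<bar> \<partial>lborel))"
    unfolding assms by (intro nn_integral_sum) auto
  also have "\<dots> = ennreal Vper_mass"
    unfolding translate Vper_mass_def
    by (simp add: ennreal_mult ennreal_of_nat_eq_real_of_nat)
  finally show ?thesis .
qed

lemma Vper_kernel_bound:
  assumes [measurable]: "f \<in> borel_measurable lborel" and f0: "\<And>x. 0 \<le> f x"
    and f_int: "integrable lborel f"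
  shows "integrable (lborel \<Otimes>\<^sub>M lborel) (\<lambda>p. \<bar>Vper (fst p - snd p)\<bar> * f (fst p))"
    and "(\<integral>p. \<bar>Vper (fst p - snd p)\<bar> * f (fst p) \<partial>(lborel \<Otimes>\<^sub>M lborel)) \<le> Vper_mass * integral\<^sup>L lborel f"
    and "integrable (lborel \<Otimes>\<^sub>M lborel) (\<lambda>p. \<bar>Vper (fst p - snd p)\<bar> * f (snd p))"
    and "(\<integral>p. \<bar>Vper (fst p - snd p)\<bar> * f (snd p) \<partial>(lborel \<Otimes>\<^sub>M lborel)) \<le> Vper_mass * integral\<^sup>L lborel f"
proof -
  have y_int: "(\<integral>\<^sup>+y. ennreal \<bar>Vper (x - y)\<bar> \<partial>lborel) \<le> ennreal Vper_mass" for x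
    by (rule Vper_nn_integral_le[where c="\<lambda>k. L *\<^sub>R k - x"])
      (metis V_even minus_diff_eq diff_diff_eq2 add.commute diff_add_eq)
  have x_int: "(\<integral>\<^sup>+x. ennreal \<bar>Vper (x - y)\<bar> \<partial>lborel) \<le> ennreal Vper_mass" for y
    by (rule Vper_nn_integral_le[where c="\<lambda>k. - y - L *\<^sub>R k"]) (simp add: algebra_simps)
  have f_nn: "(\<integral>\<^sup>+x. ennreal (f x) \<partial>lborel) = ennreal (integral\<^sup>L lborel f)"
    using f_int f0 by (intro nn_integral_eq_integral) auto
  have bound: "Vper_mass * integral\<^sup>L lborel f \<ge> 0"
    using Vper_mass_nonneg f0 by (simp add: integral_nonneg_AE)
  have "(\<integral>\<^sup>+p. ennreal (\<bar>Vper (fst p - snd p)\<bar> * f (fst p)) \<partial>(lborel \<Otimes>\<^sub>M lborel))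
      = (\<integral>\<^sup>+x. \<integral>\<^sup>+y. ennreal (f x) * ennreal \<bar>Vper (x - y)\<bar> \<partial>lborel \<partial>lborel)"
    by (subst lborel.nn_integral_fst[symmetric], measurable)
      (use f0 in \<open>simp add: ennreal_mult' mult.commute\<close>)
  also have "\<dots> = (\<integral>\<^sup>+x. ennreal (f x) * \<integral>\<^sup>+y. ennreal \<bar>Vper (x - y)\<bar> \<partial>lborel \<partial>lborel)"
    by (intro nn_integral_cong nn_integral_cmult) measurable
  also have "\<dots> \<le> (\<integral>\<^sup>+x. ennreal (f x) * ennreal Vper_mass \<partial>lborel)"
    by (intro nn_integral_mono mult_left_mono y_int) auto
  also have "\<dots> = ennreal (Vper_mass * integral\<^sup>L lborel f)"
    using Vper_mass_nonneg by (subst nn_integral_multc) (auto simp: f_nn ennreal_mult' mult.commute)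
  finally have fst_nn: "(\<integral>\<^sup>+p. ennreal (\<bar>Vper (fst p - snd p)\<bar> * f (fst p)) \<partial>(lborel \<Otimes>\<^sub>M lborel))
      \<le> ennreal (Vper_mass * integral\<^sup>L lborel f)" .
  have "(\<integral>\<^sup>+p. ennreal (\<bar>Vper (fst p - snd p)\<bar> * f (snd p)) \<partial>(lborel \<Otimes>\<^sub>M lborel))
      = (\<integral>\<^sup>+y. \<integral>\<^sup>+x. ennreal (f y) * ennreal \<bar>Vper (x - y)\<bar> \<partial>lborel \<partial>lborel)"
    by (subst lborel_pair.nn_integral_snd[symmetric], measurable)
      (use f0 in \<open>simp add: ennreal_mult' mult.commute\<close>)
  also have "\<dots> = (\<integral>\<^sup>+y. ennreal (f y) * \<integral>\<^sup>+x. ennreal \<bar>Vper (x - y)\<bar> \<partial>lborel \<partial>lborel)"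
    by (intro nn_integral_cong nn_integral_cmult) measurable
  also have "\<dots> \<le> (\<integral>\<^sup>+y. ennreal (f y) * ennreal Vper_mass \<partial>lborel)"
    by (intro nn_integral_mono mult_left_mono x_int) auto
  also have "\<dots> = ennreal (Vper_mass * integral\<^sup>L lborel f)"
    using Vper_mass_nonneg by (subst nn_integral_multc) (auto simp: f_nn ennreal_mult' mult.commute)
  finally have snd_nn: "(\<integral>\<^sup>+p. ennreal (\<bar>Vper (fst p - snd p)\<bar> * f (snd p)) \<partial>(lborel \<Otimes>\<^sub>M lborel))
      \<le> ennreal (Vper_mass * integral\<^sup>L lborel f)" .
  show "integrable (lborel \<Otimes>\<^sub>M lborel) (\<lambda>p. \<bar>Vper (fst p - snd p)\<bar> * f (fst p))"
    and "(\<integral>p. \<bar>Vper (fst p - snd p)\<bar> * f (fst p) \<partial>(lborel \<Otimes>\<^sub>M lborel)) \<le> Vper_mass * integral\<^sup>L lborel f"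
    using integrable_nn_integral_le[OF _ _ fst_nn bound] f0 by auto
  show "integrable (lborel \<Otimes>\<^sub>M lborel) (\<lambda>p. \<bar>Vper (fst p - snd p)\<bar> * f (snd p))"
    and "(\<integral>p. \<bar>Vper (fst p - snd p)\<bar> * f (snd p) \<partial>(lborel \<Otimes>\<^sub>M lborel)) \<le> Vper_mass * integral\<^sup>L lborel f"
    using integrable_nn_integral_le[OF _ _ snd_nn bound] f0 by auto
qed

definition ell :: real where "ell = measure lborel (cube L :: (real^'n) set)"

lemma emeasure_cube: "emeasure lborel (cube L :: (real^'n) set) = ennreal ell"
  unfolding ell_def using cube_emeasure[where 'n='n, OF L_pos] by (simp add: emeasure_eq_ennreal_measure)

lemma ell_pos: "0 < ell"
  using cube_emeasure(1)[where 'n='n, OF L_pos] emeasure_cube by simp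

lemma integrable_cube: "integrable lborel (indicator (cube L) :: real^'n \<Rightarrow> real)"
  using emeasure_cube by simp

text \<open>The simplifier normalizes integrals of indicator functions to the content of the set.\<close>
lemma content_cube: "Henstock_Kurzweil_Integration.content (cube L :: (real^'n) set) = ell"
  unfolding ell_def by simp

definition energy_density :: "(real^'n \<Rightarrow> real) \<Rightarrow> (real^'n) \<times> (real^'n) \<Rightarrow> real" where
  "energy_density f p = indicator (cube L) (fst p) * indicator (cube L) (snd p)
      * (Vper (fst p - snd p) * f (fst p) * f (snd p))"

lemma energy_density_borel [measurable]:
  assumes [measurable]: "f \<in> borel_measurable borel"
  shows "energy_density f \<in> borel_measurable (lborel \<Otimes>\<^sub>M lborel)"
  unfolding energy_density_def by measurable

lemma energy_eq:
  "energy L V f = (if integrable (lborel \<Otimes>\<^sub>M lborel) (energy_density f)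
      then ereal (integral\<^sup>L (lborel \<Otimes>\<^sub>M lborel) (energy_density f)) else \<infinity>)"
proof -
  have "indicator (cube L \<times> cube L) p *\<^sub>R (case p of (x, y) \<Rightarrow> periodize L V (x - y) * f x * f y)
      = energy_density f p" for p
    by (cases p) (auto simp: energy_density_def periodize_eq_Vper indicator_times
        split: split_indicator)
  then show ?thesis
    unfolding energy_def Let_def set_integrable_def set_lebesgue_integral_def by presburger
qed

text \<open>The constant K bounding the energy increase per unit of redistributed mass.\<close>
definition energy_cost :: real where
  "energy_cost = 2 * real (card (near_cells::(real^'n) set)) * V0 + 2 * Vper_mass / ell"

end

section \<open>Cutting off a density at a high level\<close>

locale cutoff = potential_setting V L a V0 for V :: "real^'n \<Rightarrow> real" and L a V0 +
  fixes \<rho> :: "real^'n \<Rightarrow> real" and M :: real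
  assumes rho_density: "\<rho> \<in> densities L" and M_pos: "0 < M"
    and exceeds: "0 < emeasure lborel {x \<in> cube L. M < \<rho> x}"
begin

lemma rho_borel [measurable]: "\<rho> \<in> borel_measurable borel"
  using rho_density by (simp add: densities_def)

lemma rho_nonneg: "0 \<le> \<rho> x"
  using rho_density by (simp add: densities_def)

lemma rho_int: "integrable lborel (\<lambda>x. indicator (cube L) x * \<rho> x)"
  using rho_density by (simp add: densities_def set_integrable_def)

lemma rho_mass: "(\<integral>x. indicator (cube L) x * \<rho> x \<partial>lborel) = 1"
  using rho_density by (simp add: densities_def set_lebesgue_integral_def)

definition trunc :: "real^'n \<Rightarrow> real" where "trunc x = min (\<rho> x) M"
definition excess :: "real^'n \<Rightarrow> real" where "excess x = max (\<rho> x - M) 0"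

lemma trunc_borel [measurable]: "trunc \<in> borel_measurable borel"
  unfolding trunc_def by measurable

lemma excess_borel [measurable]: "excess \<in> borel_measurable borel"
  unfolding excess_def by measurable

lemma rho_split: "\<rho> x = trunc x + excess x"
  unfolding trunc_def excess_def by auto

lemma trunc_bounds: "0 \<le> trunc x" "trunc x \<le> \<rho> x" "trunc x \<le> M"
  unfolding trunc_def using rho_nonneg M_pos by auto

lemma excess_bounds: "0 \<le> excess x" "excess x \<le> \<rho> x"
  unfolding excess_def using rho_nonneg M_pos by auto

lemma trunc_int: "integrable lborel (\<lambda>x. indicator (cube L) x * trunc x)"
  by (rule Bochner_Integration.integrable_bound[OF rho_int])
    (auto simp: trunc_bounds rho_nonneg split: split_indicator)

lemma excess_int: "integrable lborel (\<lambda>x. indicator (cube L) x * excess x)"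
  by (rule Bochner_Integration.integrable_bound[OF rho_int])
    (auto simp: excess_bounds rho_nonneg split: split_indicator)

definition excess_mass :: real where
  "excess_mass = (\<integral>x. indicator (cube L) x * excess x \<partial>lborel)"

lemma trunc_mass: "(\<integral>x. indicator (cube L) x * trunc x \<partial>lborel) = 1 - excess_mass"
proof -
  have "(\<integral>x. indicator (cube L) x * trunc x \<partial>lborel) + excess_mass
      = (\<integral>x. indicator (cube L) x * \<rho> x \<partial>lborel)"
    unfolding excess_mass_def using trunc_int excess_int
    by (simp add: rho_split distrib_left)
  then show ?thesis using rho_mass by simp
qed

lemma excess_mass_pos: "0 < excess_mass"
proof (rule ccontr)
  assume "\<not> 0 < excess_mass"
  moreover have "0 \<le> excess_mass"
    unfolding excess_mass_def by (intro integral_nonneg_AE) (auto simp: excess_bounds)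
  ultimately have "excess_mass = 0" by simp
  then have "AE x in lborel. indicator (cube L) x * excess x = 0"
    unfolding excess_mass_def using excess_int
    by (subst (asm) integral_nonneg_eq_0_iff_AE) (auto simp: excess_bounds)
  then have "AE x in lborel. x \<notin> {x \<in> cube L. M < \<rho> x}"
    by (rule eventually_mono) (auto simp: excess_def)
  then have "emeasure lborel {x \<in> cube L. M < \<rho> x} = 0"
    by (subst AE_iff_measurable[symmetric]) auto
  then show False using exceeds by simp
qed

definition lift :: real where "lift = excess_mass / ell"
definition rho_flat :: "real^'n \<Rightarrow> real" where "rho_flat x = trunc x + lift"

lemma lift_pos: "0 < lift"
  unfolding lift_def using excess_mass_pos ell_pos by simp

lemma lift_ell: "lift * ell = excess_mass"
  unfolding lift_def using ell_pos by simp

lemma rho_flat_borel [measurable]: "rho_flat \<in> borel_measurable borel"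
  unfolding rho_flat_def by measurable

lemma rho_flat_bounds: "lift \<le> rho_flat x" "rho_flat x \<le> M + lift" "0 < rho_flat x"
  unfolding rho_flat_def using trunc_bounds[of x] lift_pos by auto

lemma rho_flat_int: "integrable lborel (\<lambda>x. indicator (cube L) x * rho_flat x)"
  unfolding rho_flat_def distrib_left using trunc_int integrable_cube by auto

lemma rho_flat_mass: "(\<integral>x. indicator (cube L) x * rho_flat x \<partial>lborel) = 1"
proof -
  have "(\<integral>x. indicator (cube L) x * rho_flat x \<partial>lborel)
      = (\<integral>x. indicator (cube L) x * trunc x \<partial>lborel) + lift * (\<integral>x. indicator (cube L :: (real^'n) set) x \<partial>lborel)"
    unfolding rho_flat_def distrib_left using trunc_int integrable_cube by (simp add: mult.commute)
  then show ?thesis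
    using trunc_mass lift_ell by (simp add: content_cube)
qed

lemma rho_flat_density: "rho_flat \<in> densities L"
proof -
  have "\<rho> (x + L *\<^sub>R k) = \<rho> x" if "k \<in> lattice" for x k
    using rho_density that by (simp add: densities_def)
  then show ?thesis
    unfolding densities_def using rho_flat_int rho_flat_mass rho_flat_bounds(3)
    by (auto simp: rho_flat_def trunc_def set_integrable_def set_lebesgue_integral_def
        less_imp_le)
qed

subsection \<open>The entropy drops\<close>

text \<open>rho_flat is bounded above and away from zero, so its entropy is finite.\<close>
lemma rho_flat_entropy_int:
  "integrable lborel (\<lambda>x. indicator (cube L) x * (rho_flat x * ln (rho_flat x)))"
proof (rule Bochner_Integration.integrable_bound)
  define B where "B = (M + lift) * (\<bar>ln lift\<bar> + \<bar>ln (M + lift)\<bar>)"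
  have "\<bar>rho_flat x * ln (rho_flat x)\<bar> \<le> B" for x
  proof -
    have "ln lift \<le> ln (rho_flat x)" "ln (rho_flat x) \<le> ln (M + lift)"
      using rho_flat_bounds[of x] lift_pos by auto
    then have "\<bar>ln (rho_flat x)\<bar> \<le> \<bar>ln lift\<bar> + \<bar>ln (M + lift)\<bar>" by linarith
    then show ?thesis
      unfolding B_def abs_mult using rho_flat_bounds[of x] by (intro mult_mono) auto
  qed
  moreover have "0 \<le> B" unfolding B_def using M_pos lift_pos by simp
  ultimately show "AE x in lborel. norm (indicator (cube L) x * (rho_flat x * ln (rho_flat x)))
      \<le> norm (B * indicator (cube L) x)"
    by (intro AE_I2) (auto split: split_indicator)
  show "integrable lborel (\<lambda>x. B * indicator (cube L :: (real^'n) set) x)"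
    using integrable_cube by auto
qed measurable

lemma rho_flat_entropy:
  "entropy L rho_flat = ereal (\<integral>x. indicator (cube L) x * (rho_flat x * ln (rho_flat x)) \<partial>lborel)"
  using rho_flat_entropy_int by (simp add: entropy_indicator)

text \<open>Pointwise entropy comparison: convexity of t ln t at rho_flat, the bound rho_flat >= M
  where the excess lives, and the tangent bound for ln at 1/ell.\<close>
lemma entropy_density_drop:
  "\<rho> x * ln (\<rho> x) - rho_flat x * ln (rho_flat x)
    \<ge> (\<rho> x - rho_flat x) + excess x * ln M + lift * (1 + ln ell) - lift * ell * rho_flat x"
proof -
  have pos: "0 < rho_flat x" by (rule rho_flat_bounds)
  have diff: "\<rho> x - rho_flat x = excess x - lift"
    unfolding rho_flat_def using rho_split[of x] by simp
  have excess_part: "excess x * ln M \<le> excess x * ln (rho_flat x)"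
  proof (cases "excess x = 0")
    case False
    then have "rho_flat x = M + lift" unfolding excess_def rho_flat_def trunc_def by simp
    then show ?thesis using M_pos lift_pos excess_bounds[of x] by (intro mult_left_mono) auto
  qed simp
  have "lift * ln (rho_flat x) \<le> lift * (ell * rho_flat x - 1 - ln ell)"
    using ln_tangent[OF pos ell_pos] lift_pos by (intro mult_left_mono) auto
  then show ?thesis
    using xlnx_tangent[OF rho_nonneg[of x] pos] excess_part unfolding diff by (simp add: algebra_simps)
qed

lemma entropy_drop:
  assumes int: "integrable lborel (\<lambda>x. indicator (cube L) x * (\<rho> x * ln (\<rho> x)))"
  shows "(\<integral>x. indicator (cube L) x * (\<rho> x * ln (\<rho> x)) \<partial>lborel)
      - (\<integral>x. indicator (cube L) x * (rho_flat x * ln (rho_flat x)) \<partial>lborel)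
    \<ge> excess_mass * (ln M + ln ell)"
proof -
  let ?I = "indicator (cube L) :: real^'n \<Rightarrow> real"
  define h where "h x = (?I x * \<rho> x - ?I x * rho_flat x) + (ln M * (?I x * excess x)
      + (lift * (1 + ln ell) * ?I x - lift * ell * (?I x * rho_flat x)))" for x
  have h_int: "integrable lborel h"
    unfolding h_def using rho_int rho_flat_int excess_int integrable_cube by auto
  have "excess_mass * (ln M + ln ell) = (1 - 1) + (ln M * excess_mass
      + (lift * (1 + ln ell) * ell - lift * ell * 1))"
    by (simp add: algebra_simps flip: lift_ell)
  also have "\<dots> = (\<integral>x. h x \<partial>lborel)"
    unfolding h_def using rho_int rho_flat_int excess_int integrable_cube
    by (simp add: rho_mass rho_flat_mass content_cube excess_mass_def)
  also have "\<dots> \<le> (\<integral>x. ?I x * (\<rho> x * ln (\<rho> x)) - ?I x * (rho_flat x * ln (rho_flat x)) \<partial>lborel)"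
  proof (rule integral_mono)
    show "integrable lborel
        (\<lambda>x. ?I x * (\<rho> x * ln (\<rho> x)) - ?I x * (rho_flat x * ln (rho_flat x)))"
      using int rho_flat_entropy_int by simp
    show "h x \<le> ?I x * (\<rho> x * ln (\<rho> x)) - ?I x * (rho_flat x * ln (rho_flat x))" for x
      using entropy_density_drop[of x] by (auto simp: h_def algebra_simps split: split_indicator)
  qed (rule h_int)
  finally show ?thesis using int rho_flat_entropy_int by simp
qed

subsection \<open>The energy rises by at most excess_mass * energy_cost\<close>

definition pair_excess :: "(real^'n) \<times> (real^'n) \<Rightarrow> real" where
  "pair_excess p = indicator (cube L) (fst p) * indicator (cube L) (snd p)
      * (\<rho> (fst p) * \<rho> (snd p) - trunc (fst p) * trunc (snd p))"

definition pair_lift :: "(real^'n) \<times> (real^'n) \<Rightarrow> real" where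
  "pair_lift p = indicator (cube L) (fst p) * indicator (cube L) (snd p)
      * (rho_flat (fst p) * rho_flat (snd p) - trunc (fst p) * trunc (snd p))"

lemma pair_excess_borel [measurable]: "pair_excess \<in> borel_measurable (lborel \<Otimes>\<^sub>M lborel)"
  unfolding pair_excess_def by measurable

lemma pair_lift_borel [measurable]: "pair_lift \<in> borel_measurable (lborel \<Otimes>\<^sub>M lborel)"
  unfolding pair_lift_def by measurable

lemma pair_excess_nonneg: "0 \<le> pair_excess p"
  unfolding pair_excess_def
  using mult_mono[OF trunc_bounds(2) trunc_bounds(2) rho_nonneg trunc_bounds(1)]
  by simp

lemma pair_lift_nonneg: "0 \<le> pair_lift p"
  unfolding pair_lift_def rho_flat_def
  using mult_mono[of "trunc (fst p)" "trunc (fst p) + lift" "trunc (snd p)" "trunc (snd p) + lift"]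
    trunc_bounds lift_pos by simp

lemma energy_density_difference:
  "energy_density \<rho> p - energy_density rho_flat p
    = Vper (fst p - snd p) * pair_excess p - Vper (fst p - snd p) * pair_lift p"
  unfolding energy_density_def pair_excess_def pair_lift_def by (simp add: algebra_simps)

text \<open>The excess pairs have mass at most twice the excess mass, since
  rho (x) rho (y) - trunc (x) trunc (y) <= rho (x) excess (y) + excess (x) rho (y).\<close>
lemma pair_excess_bound:
  shows "integrable (lborel \<Otimes>\<^sub>M lborel) pair_excess"
    and "integral\<^sup>L (lborel \<Otimes>\<^sub>M lborel) pair_excess \<le> 2 * excess_mass"
proof -
  define f where "f x = indicator (cube L) x * \<rho> x" for x
  define g where "g x = indicator (cube L) x * excess x" for x
  have [measurable]: "f \<in> borel_measurable lborel" "g \<in> borel_measurable lborel"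
    unfolding f_def g_def by measurable
  have nonneg: "0 \<le> f x" "0 \<le> g x" for x
    unfolding f_def g_def using rho_nonneg excess_bounds by auto
  have ints: "integrable lborel f" "integrable lborel g"
    unfolding f_def g_def by (fact rho_int excess_int)+
  let ?B = "\<lambda>p. f (fst p) * g (snd p) + g (fst p) * f (snd p)"
  have masses: "integral\<^sup>L lborel f = 1" "integral\<^sup>L lborel g = excess_mass"
    unfolding f_def g_def excess_mass_def by (fact rho_mass refl)+
  have B_int: "integrable (lborel \<Otimes>\<^sub>M lborel) ?B"
    using integral_tensor(1)[of f g] integral_tensor(1)[of g f] nonneg ints by auto
  have B_integral: "integral\<^sup>L (lborel \<Otimes>\<^sub>M lborel) ?B = 2 * excess_mass"
    using integral_tensor[of f g] integral_tensor[of g f] nonneg ints by (simp add: masses)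
  have bound: "pair_excess p \<le> ?B p" for p
  proof -
    have "\<rho> (fst p) * \<rho> (snd p) - trunc (fst p) * trunc (snd p)
        = \<rho> (fst p) * excess (snd p) + excess (fst p) * trunc (snd p)"
      using rho_split[of "fst p"] rho_split[of "snd p"] by (simp add: algebra_simps)
    also have "\<dots> \<le> \<rho> (fst p) * excess (snd p) + excess (fst p) * \<rho> (snd p)"
      using excess_bounds trunc_bounds by (simp add: mult_left_mono)
    finally show ?thesis
      unfolding pair_excess_def f_def g_def using rho_nonneg excess_bounds
      by (auto split: split_indicator)
  qed
  have "norm (pair_excess p) \<le> norm (?B p)" for p
  proof -
    have "norm (pair_excess p) = pair_excess p" using pair_excess_nonneg[of p] by simp
    also have "\<dots> \<le> ?B p" by (rule bound)
    also have "\<dots> \<le> norm (?B p)" by simp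
    finally show ?thesis .
  qed
  then show int: "integrable (lborel \<Otimes>\<^sub>M lborel) pair_excess"
    by (intro Bochner_Integration.integrable_bound[OF B_int] AE_I2) auto
  show "integral\<^sup>L (lborel \<Otimes>\<^sub>M lborel) pair_excess \<le> 2 * excess_mass"
    using integral_mono[OF int B_int bound] B_integral by simp
qed

text \<open>Against the kernel |Vper|, the lifted pairs cost at most 2 lift Vper_mass, since
  rho_flat (x) rho_flat (y) - trunc (x) trunc (y) <= lift (rho_flat (x) + rho_flat (y)).\<close>
lemma pair_lift_bound:
  shows "integrable (lborel \<Otimes>\<^sub>M lborel) (\<lambda>p. \<bar>Vper (fst p - snd p)\<bar> * pair_lift p)"
    and "(\<integral>p. \<bar>Vper (fst p - snd p)\<bar> * pair_lift p \<partial>(lborel \<Otimes>\<^sub>M lborel)) \<le> 2 * lift * Vper_mass"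
proof -
  define f where "f x = indicator (cube L) x * rho_flat x" for x
  have f_borel [measurable]: "f \<in> borel_measurable lborel" unfolding f_def by measurable
  have f_nonneg: "0 \<le> f x" for x unfolding f_def using rho_flat_bounds(3)[of x] by simp
  have f_int: "integrable lborel f" and f_mass: "integral\<^sup>L lborel f = 1"
    unfolding f_def by (fact rho_flat_int rho_flat_mass)+
  note kernel = Vper_kernel_bound[OF f_borel f_nonneg f_int, unfolded f_mass]
  let ?K = "\<lambda>p. \<bar>Vper (fst p - snd p)\<bar>"
  let ?B = "\<lambda>p. lift * (?K p * f (fst p)) + lift * (?K p * f (snd p))"
  have B_int: "integrable (lborel \<Otimes>\<^sub>M lborel) ?B" using kernel by auto
  have bound: "?K p * pair_lift p \<le> ?B p" for p
  proof -
    have "pair_lift p \<le> lift * f (fst p) + lift * f (snd p)"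
      unfolding pair_lift_def f_def rho_flat_def using trunc_bounds lift_pos
      by (auto simp: algebra_simps split: split_indicator)
    then have "?K p * pair_lift p \<le> ?K p * (lift * f (fst p) + lift * f (snd p))"
      by (rule mult_left_mono) simp
    then show ?thesis by (simp add: algebra_simps)
  qed
  have "norm (?K p * pair_lift p) \<le> norm (?B p)" for p
  proof -
    have "norm (?K p * pair_lift p) = ?K p * pair_lift p" using pair_lift_nonneg[of p] by simp
    also have "\<dots> \<le> ?B p" by (rule bound)
    also have "\<dots> \<le> norm (?B p)" by simp
    finally show ?thesis .
  qed
  then show int: "integrable (lborel \<Otimes>\<^sub>M lborel) (\<lambda>p. ?K p * pair_lift p)"
    by (intro Bochner_Integration.integrable_bound[OF B_int] AE_I2) auto
  have "(\<integral>p. ?K p * pair_lift p \<partial>(lborel \<Otimes>\<^sub>M lborel)) \<le> integral\<^sup>L (lborel \<Otimes>\<^sub>M lborel) ?B"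
    using int B_int bound by (rule integral_mono)
  also have "\<dots> \<le> lift * Vper_mass + lift * Vper_mass"
  proof -
    have "lift * (\<integral>p. ?K p * f (fst p) \<partial>(lborel \<Otimes>\<^sub>M lborel)) \<le> lift * Vper_mass"
      and "lift * (\<integral>p. ?K p * f (snd p) \<partial>(lborel \<Otimes>\<^sub>M lborel)) \<le> lift * Vper_mass"
      using kernel lift_pos by (intro mult_left_mono; simp)+
    then show ?thesis using kernel(1,3)
      by (subst Bochner_Integration.integral_add) (simp_all add: mult.commute[of lift])
  qed
  finally show "(\<integral>p. ?K p * pair_lift p \<partial>(lborel \<Otimes>\<^sub>M lborel)) \<le> 2 * lift * Vper_mass"
    by (simp add: mult_ac)
qed

text \<open>rho_flat is bounded, so its energy is finite.\<close>
lemma rho_flat_energy_int: "integrable (lborel \<Otimes>\<^sub>M lborel) (energy_density rho_flat)"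
proof -
  define f where "f x = indicator (cube L) x * rho_flat x" for x
  have f_borel [measurable]: "f \<in> borel_measurable lborel" unfolding f_def by measurable
  have f_nonneg: "0 \<le> f x" for x unfolding f_def using rho_flat_bounds(3)[of x] by simp
  have f_int: "integrable lborel f" unfolding f_def by (rule rho_flat_int)
  have "integrable (lborel \<Otimes>\<^sub>M lborel) (\<lambda>p. (M + lift) * (\<bar>Vper (fst p - snd p)\<bar> * f (fst p)))"
    using Vper_kernel_bound(1)[OF f_borel f_nonneg f_int] by (rule integrable_mult_right)
  then show ?thesis
  proof (rule Bochner_Integration.integrable_bound)
    show "AE p in lborel \<Otimes>\<^sub>M lborel. norm (energy_density rho_flat p)
        \<le> norm ((M + lift) * (\<bar>Vper (fst p - snd p)\<bar> * f (fst p)))"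
    proof (intro AE_I2)
      fix p :: "(real^'n) \<times> (real^'n)"
      have "\<bar>rho_flat (snd p)\<bar> \<le> M + lift" using rho_flat_bounds[of "snd p"] by simp
      then have "\<bar>Vper (fst p - snd p)\<bar> * \<bar>rho_flat (fst p)\<bar> * \<bar>rho_flat (snd p)\<bar>
          \<le> \<bar>Vper (fst p - snd p)\<bar> * \<bar>rho_flat (fst p)\<bar> * (M + lift)"
        by (intro mult_left_mono) simp_all
      then show "norm (energy_density rho_flat p)
          \<le> norm ((M + lift) * (\<bar>Vper (fst p - snd p)\<bar> * f (fst p)))"
        using lift_pos M_pos
        by (auto simp: energy_density_def f_def abs_mult mult_ac split: split_indicator)
    qed
  qed measurable
qed

text \<open>The energy comparison: the excess pairs meet the potential bounded below by
  -card(near_cells) V0, the lifted pairs are controlled by the L1 norm of the kernel.\<close>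
lemma energy_rise:
  assumes int: "integrable (lborel \<Otimes>\<^sub>M lborel) (energy_density \<rho>)"
  shows "integral\<^sup>L (lborel \<Otimes>\<^sub>M lborel) (energy_density \<rho>)
      - integral\<^sup>L (lborel \<Otimes>\<^sub>M lborel) (energy_density rho_flat)
    \<ge> - (excess_mass * energy_cost)"
proof -
  define cV where "cV = real (card (near_cells::(real^'n) set)) * V0"
  let ?K = "\<lambda>p. \<bar>Vper (fst p - snd p)\<bar>"
  have lower: "AE p in lborel \<Otimes>\<^sub>M lborel.
      - cV * pair_excess p - ?K p * pair_lift p \<le> energy_density \<rho> p - energy_density rho_flat p"
    using Vper_lower unfolding cV_def[symmetric]
  proof (rule eventually_mono)
    fix p :: "(real^'n) \<times> (real^'n)"
    assume "- cV \<le> Vper (fst p - snd p)"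
    then have "- cV * pair_excess p \<le> Vper (fst p - snd p) * pair_excess p"
      using pair_excess_nonneg by (intro mult_right_mono) auto
    moreover have "Vper (fst p - snd p) * pair_lift p \<le> ?K p * pair_lift p"
      using pair_lift_nonneg by (intro mult_right_mono) auto
    ultimately show "- cV * pair_excess p - ?K p * pair_lift p
        \<le> energy_density \<rho> p - energy_density rho_flat p"
      unfolding energy_density_difference by linarith
  qed
  have "- (excess_mass * energy_cost) \<le> - cV * (2 * excess_mass) - 2 * lift * Vper_mass"
    unfolding energy_cost_def cV_def lift_def by (simp add: algebra_simps)
  also have "\<dots> \<le> - cV * integral\<^sup>L (lborel \<Otimes>\<^sub>M lborel) pair_excess
      - (\<integral>p. ?K p * pair_lift p \<partial>(lborel \<Otimes>\<^sub>M lborel))"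
    using pair_excess_bound(2) pair_lift_bound(2) V0_nonneg unfolding cV_def
    by (intro diff_mono mult_left_mono_neg) auto
  also have "\<dots> = (\<integral>p. - cV * pair_excess p - ?K p * pair_lift p \<partial>(lborel \<Otimes>\<^sub>M lborel))"
    using pair_excess_bound(1) pair_lift_bound(1) by simp
  also have "\<dots> \<le> (\<integral>p. energy_density \<rho> p - energy_density rho_flat p \<partial>(lborel \<Otimes>\<^sub>M lborel))"
    using pair_excess_bound(1) pair_lift_bound(1) int rho_flat_energy_int lower
    by (intro integral_mono_AE) auto
  also have "\<dots> = integral\<^sup>L (lborel \<Otimes>\<^sub>M lborel) (energy_density \<rho>)
      - integral\<^sup>L (lborel \<Otimes>\<^sub>M lborel) (energy_density rho_flat)"
    using int rho_flat_energy_int by simp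
  finally show ?thesis .
qed

subsection \<open>The free energy drops\<close>

lemma entropy_lower:
  "entropy L \<rho> \<ge> ereal ((\<integral>x. indicator (cube L) x * (rho_flat x * ln (rho_flat x)) \<partial>lborel)
      + excess_mass * (ln M + ln ell))"
  using entropy_drop by (simp add: entropy_indicator algebra_simps)

lemma energy_lower:
  assumes "0 \<le> c"
  shows "ereal c * energy L V \<rho>
    \<ge> ereal (c * (integral\<^sup>L (lborel \<Otimes>\<^sub>M lborel) (energy_density rho_flat) - excess_mass * energy_cost))"
proof (cases "integrable (lborel \<Otimes>\<^sub>M lborel) (energy_density \<rho>)")
  case True
  have "c * (integral\<^sup>L (lborel \<Otimes>\<^sub>M lborel) (energy_density rho_flat) - excess_mass * energy_cost)
      \<le> c * integral\<^sup>L (lborel \<Otimes>\<^sub>M lborel) (energy_density \<rho>)"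
    using energy_rise[OF True] assms by (intro mult_left_mono) auto
  then show ?thesis using True by (simp add: energy_eq)
next
  case False
  then show ?thesis
    using assms by (cases "c = 0") (simp_all add: energy_eq)
qed

lemma free_energy_drop:
  assumes c: "0 \<le> c" and level: "c * energy_cost + 1 \<le> ln M + ln ell"
  shows "entropy L rho_flat + ereal c * energy L V rho_flat < entropy L \<rho> + ereal c * energy L V \<rho>"
proof -
  define S where "S = (\<integral>x. indicator (cube L) x * (rho_flat x * ln (rho_flat x)) \<partial>lborel)"
  define E where "E = integral\<^sup>L (lborel \<Otimes>\<^sub>M lborel) (energy_density rho_flat)"
  have "excess_mass * (c * energy_cost) < excess_mass * (ln M + ln ell)"
    using level excess_mass_pos by (intro mult_strict_left_mono) auto
  then have "entropy L rho_flat + ereal c * energy L V rho_flat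
      < ereal (S + excess_mass * (ln M + ln ell)) + ereal (c * (E - excess_mass * energy_cost))"
    unfolding rho_flat_entropy energy_eq S_def[symmetric] E_def[symmetric]
    using rho_flat_energy_int by (simp add: algebra_simps)
  also have "\<dots> \<le> entropy L \<rho> + ereal c * energy L V \<rho>"
    unfolding S_def E_def using entropy_lower energy_lower[OF c] by (rule add_mono)
  finally show ?thesis .
qed

end

theorem lemma2p1:
  fixes V :: "real^'n \<Rightarrow> real" and L a \<theta> :: real
  assumes "L > 0" and "V \<in> potential_class L a" and "\<theta> \<ge> 0"
  shows "\<exists>B0::real. \<forall>\<rho> \<in> densities L. sup_norm L \<rho> > ereal B0 \<longrightarrow>
           (\<exists>\<rho>' \<in> densities L. free_energy L V \<theta> \<rho> > free_energy L V \<theta> \<rho>')"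
proof -
  obtain V0 where "potential_setting V L a V0"
    using potential_class_setting[OF assms(1,2)] .
  then interpret potential_setting V L a V0 .
  define c where "c = \<theta> * L ^ CARD('n) / 2"
  define B0 where "B0 = exp (c * energy_cost + 1 - ln ell)"
  have "\<exists>\<rho>' \<in> densities L. free_energy L V \<theta> \<rho> > free_energy L V \<theta> \<rho>'"
    if \<rho>: "\<rho> \<in> densities L" and big: "sup_norm L \<rho> > ereal B0" for \<rho>
  proof -
    have "0 < emeasure lborel {x \<in> cube L. B0 < \<rho> x}"
      using \<rho> big by (intro sup_norm_gt_imp_pos_measure) (auto simp: densities_def)
    then interpret cutoff V L a V0 \<rho> B0
      using \<rho> by unfold_locales (simp_all add: B0_def)
    have "free_energy L V \<theta> rho_flat < free_energy L V \<theta> \<rho>"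
      unfolding free_energy_def c_def[symmetric]
      using assms(1,3) by (intro free_energy_drop) (simp_all add: c_def B0_def)
    then show ?thesis using rho_flat_density by blast
  qed
  then show ?thesis by blast
qed

end
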